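(* Let $G$ be a topological groupoid and $Z$ a topological space with a right action of $G$ (momentum map $p\colon Z\to G^{(0)}$). Consider: (i) $G$ acts properly on $Z$; (ii) $(r,s)\colon Z\rtimes G\to Z\times Z$, $(z,g)\mapsto(z,zg)$, is closed and for every $z\in Z$ the stabilizer $\{g\in G: p(z)=r(g), zg=z\}$ is quasi-compact; (iii) for all quasi-compact $K,L\subset Z$, $\{g\in G: Lg\cap K\neq\emptyset\}$ is quasi-compact; (iii)' for all compact $K,L\subset Z$, $\{g\in G: Lg\cap K\neq\emptyset\}$ is quasi-compact; (iv) for every quasi-compact $K\subset Z$, $\{g\in G: Kg\cap K\neq\emptyset\}$ is quasi-compact; (v) there is a family $(A_i)_{i\in I}$ of subsets of $Z$ with $Z=\bigcup_i\mathrm{int}(A_i)$ such that $\{g\in G: A_ig\cap A_j\neq\emptyset\}$ is relatively quasi-compact for all $i,j\in I$. Then (i)$\iff$(ii)$\implies$(iii)$\implies$(iii)' and (iii)$\implies$(iv). If $Z$ is locally compact, then (iii)'$\implies$(v) and (iv)$\implies$(v). If $G^{(0)}$ is Hausdorff and $Z$ is locally compact Hausdorff, then (i)–(v) are all equivalent.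
   Context: Quasi-compact: every open cover has a finite subcover; compact: quasi-compact Hausdorff; locally compact: every point has a compact neighbourhood. A subset is relatively quasi-compact if contained in a quasi-compact subset. A continuous map is proper if closed with quasi-compact fibres; a groupoid is proper if $(r,s)$ onto unit space squared is proper. A right action: $zg$ defined when $p(z)=r(g)$, with $p(zg)=s(g)$. $Z\rtimes G=\{(z,g)\in Z\times G: p(z)=r(g)\}$ is a groupoid with unit space $Z$, range $(z,g)\mapsto z$, source $(z,g)\mapsto zg$. The action is proper if $Z\rtimes G$ is a proper groupoid. $Lg=\{zg: z\in L, p(z)=r(g)\}$. *)

theory Defs
  imports "HOL-Analysis.Analysis"
begin

text \<open>A topological groupoid: the arrows are the points of the topological space TG;
  the unit space is a subset U of the arrows (with the subspace topology);
  r, s are range and source, m is the (partial) multiplication, defined on pairs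
  (g,h) with s g = r h, and i is the inversion.\<close>

definition composable_pairs :: "'g topology \<Rightarrow> ('g \<Rightarrow> 'g) \<Rightarrow> ('g \<Rightarrow> 'g) \<Rightarrow> ('g \<times> 'g) set" where
  "composable_pairs TG r s = {(g, h). g \<in> topspace TG \<and> h \<in> topspace TG \<and> s g = r h}"

definition topological_groupoid ::
  "'g topology \<Rightarrow> 'g set \<Rightarrow> ('g \<Rightarrow> 'g) \<Rightarrow> ('g \<Rightarrow> 'g) \<Rightarrow> ('g \<Rightarrow> 'g \<Rightarrow> 'g) \<Rightarrow> ('g \<Rightarrow> 'g) \<Rightarrow> bool" where
  "topological_groupoid TG U r s m i \<longleftrightarrow>
     U \<subseteq> topspace TG \<and>
     (\<forall>g \<in> topspace TG. r g \<in> U \<and> s g \<in> U) \<and>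
     (\<forall>u \<in> U. r u = u \<and> s u = u) \<and>
     (\<forall>g \<in> topspace TG. \<forall>h \<in> topspace TG. s g = r h \<longrightarrow>
        m g h \<in> topspace TG \<and> r (m g h) = r g \<and> s (m g h) = s h) \<and>
     (\<forall>g \<in> topspace TG. \<forall>h \<in> topspace TG. \<forall>k \<in> topspace TG.
        s g = r h \<and> s h = r k \<longrightarrow> m (m g h) k = m g (m h k)) \<and>
     (\<forall>g \<in> topspace TG. m (r g) g = g \<and> m g (s g) = g) \<and>
     (\<forall>g \<in> topspace TG. i g \<in> topspace TG \<and> r (i g) = s g \<and> s (i g) = r g \<and>
        m g (i g) = r g \<and> m (i g) g = s g) \<and>
     continuous_map TG TG r \<and> continuous_map TG TG s \<and> continuous_map TG TG i \<and>
     continuous_map (subtopology (prod_topology TG TG) (composable_pairs TG r s)) TG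
        (\<lambda>(g, h). m g h)"

definition action_pairs :: "'z topology \<Rightarrow> 'g topology \<Rightarrow> ('g \<Rightarrow> 'g) \<Rightarrow> ('z \<Rightarrow> 'g) \<Rightarrow> ('z \<times> 'g) set" where
  "action_pairs TZ TG r p = {(z, g). z \<in> topspace TZ \<and> g \<in> topspace TG \<and> p z = r g}"

definition groupoid_right_action ::
  "'g topology \<Rightarrow> 'g set \<Rightarrow> ('g \<Rightarrow> 'g) \<Rightarrow> ('g \<Rightarrow> 'g) \<Rightarrow> ('g \<Rightarrow> 'g \<Rightarrow> 'g) \<Rightarrow> ('g \<Rightarrow> 'g) \<Rightarrow>
   'z topology \<Rightarrow> ('z \<Rightarrow> 'g) \<Rightarrow> ('z \<Rightarrow> 'g \<Rightarrow> 'z) \<Rightarrow> bool" where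
  "groupoid_right_action TG U r s m i TZ p a \<longleftrightarrow>
     topological_groupoid TG U r s m i \<and>
     continuous_map TZ (subtopology TG U) p \<and>
     (\<forall>z \<in> topspace TZ. \<forall>g \<in> topspace TG. p z = r g \<longrightarrow>
        a z g \<in> topspace TZ \<and> p (a z g) = s g) \<and>
     (\<forall>z \<in> topspace TZ. a z (p z) = z) \<and>
     (\<forall>z \<in> topspace TZ. \<forall>g \<in> topspace TG. \<forall>h \<in> topspace TG.
        p z = r g \<and> s g = r h \<longrightarrow> a (a z g) h = a z (m g h)) \<and>
     continuous_map (subtopology (prod_topology TZ TG) (action_pairs TZ TG r p)) TZ
        (\<lambda>(z, g). a z g)"

text \<open>Proper map in the sense of the paper (closed with quasi-compact fibres) is the
  library's proper_map.\<close>

definition proper_groupoid :: "'a topology \<Rightarrow> 'u topology \<Rightarrow> ('a \<Rightarrow> 'u) \<Rightarrow> ('a \<Rightarrow> 'u) \<Rightarrow> bool" where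
  "proper_groupoid TA TU ra sa \<longleftrightarrow> proper_map TA (prod_topology TU TU) (\<lambda>x. (ra x, sa x))"

text \<open>The transformation groupoid Z \<rtimes> G has arrow space action_pairs (subspace of Z \<times> G),
  unit space Z, range (z,g) \<mapsto> z and source (z,g) \<mapsto> zg.\<close>

definition proper_action ::
  "'g topology \<Rightarrow> ('g \<Rightarrow> 'g) \<Rightarrow> 'z topology \<Rightarrow> ('z \<Rightarrow> 'g) \<Rightarrow> ('z \<Rightarrow> 'g \<Rightarrow> 'z) \<Rightarrow> bool" where
  "proper_action TG r TZ p a \<longleftrightarrow>
     proper_groupoid (subtopology (prod_topology TZ TG) (action_pairs TZ TG r p)) TZ
       (\<lambda>(z, g). z) (\<lambda>(z, g). a z g)"

definition act_set :: "('g \<Rightarrow> 'g) \<Rightarrow> ('z \<Rightarrow> 'g) \<Rightarrow> ('z \<Rightarrow> 'g \<Rightarrow> 'z) \<Rightarrow> 'z set \<Rightarrow> 'g \<Rightarrow> 'z set" where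
  "act_set r p a L g = {a z g | z. z \<in> L \<and> p z = r g}"

definition transporter :: "'g topology \<Rightarrow> ('g \<Rightarrow> 'g) \<Rightarrow> ('z \<Rightarrow> 'g) \<Rightarrow> ('z \<Rightarrow> 'g \<Rightarrow> 'z) \<Rightarrow>
    'z set \<Rightarrow> 'z set \<Rightarrow> 'g set" where
  "transporter TG r p a L K = {g \<in> topspace TG. act_set r p a L g \<inter> K \<noteq> {}}"

definition stabilizer :: "'g topology \<Rightarrow> ('g \<Rightarrow> 'g) \<Rightarrow> ('z \<Rightarrow> 'g) \<Rightarrow> ('z \<Rightarrow> 'g \<Rightarrow> 'z) \<Rightarrow> 'z \<Rightarrow> 'g set" where
  "stabilizer TG r p a z = {g \<in> topspace TG. p z = r g \<and> a z g = z}"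

text \<open>Quasi-compact = library compactin (no separation). Compact = quasi-compact Hausdorff.\<close>

definition compact_subset :: "'a topology \<Rightarrow> 'a set \<Rightarrow> bool" where
  "compact_subset X K \<longleftrightarrow> compactin X K \<and> Hausdorff_space (subtopology X K)"

definition rel_quasi_compact :: "'a topology \<Rightarrow> 'a set \<Rightarrow> bool" where
  "rel_quasi_compact X S \<longleftrightarrow> (\<exists>C. compactin X C \<and> S \<subseteq> C)"

definition locally_compact_paper :: "'a topology \<Rightarrow> bool" where
  "locally_compact_paper X \<longleftrightarrow>
     (\<forall>x \<in> topspace X. \<exists>U K. openin X U \<and> x \<in> U \<and> U \<subseteq> K \<and> compact_subset X K)"

end

theory Submission
  imports Defs
begin

text \<open>Everything revolves around the map \<open>(z, g) \<mapsto> (z, zg)\<close> on \<open>Z \<rtimes> G\<close>: its fibre over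
  \<open>(z, z)\<close> is the stabilizer of \<open>z\<close>, every nonempty fibre over \<open>(z, zg\<^sub>0)\<close> is the right
  translate of that stabilizer by \<open>g\<^sub>0\<close>, and the preimage of \<open>L \<times> K\<close> projects onto
  \<open>{g. Lg \<inter> K \<noteq> {}}\<close>.  So properness gives (ii) and (iii), and (iii)', (iv) give (v) by
  covering \<open>Z\<close> with interiors of compact neighbourhoods.  Conversely, (v) and local
  compactness of \<open>Z\<close> give every point of \<open>Z \<times> Z\<close> a neighbourhood whose preimage lies in
  \<open>(K \<times> C) \<inter> (Z \<rtimes> G)\<close>, with \<open>K\<close> a compact neighbourhood in \<open>Z\<close> and \<open>C\<close> a compact
  set of arrows containing a transporter.  This set is compact because \<open>Z \<rtimes> G\<close> is closed
  in \<open>Z \<times> G\<close> once the unit space is Hausdorff, and a continuous map into a Hausdorff space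
  with this property is proper.\<close>

lemma proper_map_if_compact_preimage_nbhds:
  assumes f: "continuous_map X Y f" and Y: "Hausdorff_space Y"
    and nbhd: "\<And>y. y \<in> topspace Y \<Longrightarrow>
      \<exists>W C. openin Y W \<and> y \<in> W \<and> compactin X C \<and> {x \<in> topspace X. f x \<in> W} \<subseteq> C"
  shows "proper_map X Y f"
  unfolding proper_map_def
proof (intro conjI ballI)
  show "closed_map X Y f"
    unfolding closed_map_def
  proof (intro allI impI)
    fix F assume F: "closedin X F"
    have fF: "f ` F \<subseteq> topspace Y"
      using closedin_subset[OF F] continuous_map_image_subset_topspace[OF f] by blast
    have "openin Y (topspace Y - f ` F)"
    proof (subst openin_subopen, intro ballI)
      fix y assume y: "y \<in> topspace Y - f ` F"
      then obtain W C where W: "openin Y W" "y \<in> W" and C: "compactin X C"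
          and WC: "{x \<in> topspace X. f x \<in> W} \<subseteq> C"
        using nbhd[of y] by auto
      have "compactin Y (f ` (F \<inter> C))"
        using image_compactin[OF closed_Int_compactin[OF F C] f] .
      then have "openin Y (W - f ` (F \<inter> C))"
        by (intro openin_diff W(1) compactin_imp_closedin[OF Y])
      moreover have "W - f ` (F \<inter> C) \<subseteq> topspace Y - f ` F"
        using WC closedin_subset[OF F] openin_subset[OF W(1)] by auto
      ultimately show "\<exists>T. openin Y T \<and> y \<in> T \<and> T \<subseteq> topspace Y - f ` F"
        using y W(2) by blast
    qed
    then show "closedin Y (f ` F)"
      using fF by (simp add: closedin_def)
  qed
next
  fix y assume y: "y \<in> topspace Y"
  then obtain W C where W: "y \<in> W" and C: "compactin X C" and WC: "{x \<in> topspace X. f x \<in> W} \<subseteq> C"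
    using nbhd by blast
  have "closedin X {x \<in> topspace X. f x \<in> {y}}"
    using closedin_continuous_map_preimage[OF f closedin_Hausdorff_singleton[OF Y y]] .
  moreover have "{x \<in> topspace X. f x \<in> {y}} \<subseteq> C"
    using W WC by blast
  ultimately show "compactin X {x \<in> topspace X. f x = y}"
    using closed_compactin[OF C] by simp
qed

lemma locally_compact_paper_cover:
  assumes "locally_compact_paper X"
  shows "topspace X = (\<Union>K \<in> {K. compact_subset X K}. X interior_of K)"
proof
  show "topspace X \<subseteq> (\<Union>K \<in> {K. compact_subset X K}. X interior_of K)"
  proof
    fix x assume "x \<in> topspace X"
    then obtain V K where "openin X V" "x \<in> V" "V \<subseteq> K" "compact_subset X K"
      using assms unfolding locally_compact_paper_def by blast
    moreover from this have "V \<subseteq> X interior_of K"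
      by (simp add: interior_of_maximal)
    ultimately show "x \<in> (\<Union>K \<in> {K. compact_subset X K}. X interior_of K)"
      by blast
  qed
qed (simp add: UN_least interior_of_subset_topspace)

lemma transporter_mono:
  "L \<subseteq> L' \<Longrightarrow> K \<subseteq> K' \<Longrightarrow> transporter TG r p a L K \<subseteq> transporter TG r p a L' K'"
  unfolding transporter_def act_set_def by blast

lemma rel_quasi_compact_transporter_if_compact_self_transporters:
  assumes "\<forall>K. compactin TZ K \<longrightarrow> compactin TG (transporter TG r p a K K)"
    and "compactin TZ K" "compactin TZ L"
  shows "rel_quasi_compact TG (transporter TG r p a L K)"
proof -
  have "compactin TG (transporter TG r p a (L \<union> K) (L \<union> K))"
    using assms by (simp add: compactin_Un)
  moreover have "transporter TG r p a L K \<subseteq> transporter TG r p a (L \<union> K) (L \<union> K)"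
    by (rule transporter_mono) auto
  ultimately show ?thesis
    unfolding rel_quasi_compact_def by blast
qed

lemma interior_cover_with_rel_compact_transporters:
  assumes "locally_compact_paper TZ"
    and "\<forall>K L. compact_subset TZ K \<and> compact_subset TZ L \<longrightarrow>
      rel_quasi_compact TG (transporter TG r p a L K)"
  shows "\<exists>\<A>. (\<forall>A \<in> \<A>. A \<subseteq> topspace TZ) \<and> topspace TZ = (\<Union>A \<in> \<A>. TZ interior_of A) \<and>
    (\<forall>A \<in> \<A>. \<forall>B \<in> \<A>. rel_quasi_compact TG (transporter TG r p a A B))"
proof (intro exI[of _ "{K. compact_subset TZ K}"] conjI)
  show "\<forall>A \<in> {K. compact_subset TZ K}. A \<subseteq> topspace TZ"
    by (simp add: compact_subset_def compactin_subset_topspace)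
  show "topspace TZ = (\<Union>A \<in> {K. compact_subset TZ K}. TZ interior_of A)"
    using assms(1) by (rule locally_compact_paper_cover)
  show "\<forall>A \<in> {K. compact_subset TZ K}. \<forall>B \<in> {K. compact_subset TZ K}.
      rel_quasi_compact TG (transporter TG r p a A B)"
    using assms(2) by simp
qed

locale groupoid_action =
  fixes TG :: "'g topology" and U :: "'g set" and r s :: "'g \<Rightarrow> 'g"
    and m :: "'g \<Rightarrow> 'g \<Rightarrow> 'g" and i :: "'g \<Rightarrow> 'g"
    and TZ :: "'z topology" and p :: "'z \<Rightarrow> 'g" and a :: "'z \<Rightarrow> 'g \<Rightarrow> 'z"
  assumes action: "groupoid_right_action TG U r s m i TZ p a"
begin

abbreviation TZG :: "('z \<times> 'g) topology"
  where "TZG \<equiv> subtopology (prod_topology TZ TG) (action_pairs TZ TG r p)"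

abbreviation rs_map :: "'z \<times> 'g \<Rightarrow> 'z \<times> 'z"
  where "rs_map \<equiv> \<lambda>(z, g). (z, a z g)"

lemma groupoid: "topological_groupoid TG U r s m i"
  using action unfolding groupoid_right_action_def by blast

lemma range_in_units: "g \<in> topspace TG \<Longrightarrow> r g \<in> U"
  using groupoid unfolding topological_groupoid_def by blast

lemma mult_closed: "\<lbrakk>g \<in> topspace TG; h \<in> topspace TG; s g = r h\<rbrakk> \<Longrightarrow>
      m g h \<in> topspace TG \<and> r (m g h) = r g \<and> s (m g h) = s h"
  using groupoid unfolding topological_groupoid_def by blast

lemma mult_assoc: "\<lbrakk>g \<in> topspace TG; h \<in> topspace TG; k \<in> topspace TG; s g = r h; s h = r k\<rbrakk> \<Longrightarrow>
      m (m g h) k = m g (m h k)"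
  using groupoid unfolding topological_groupoid_def by blast

lemma mult_source: "g \<in> topspace TG \<Longrightarrow> m g (s g) = g"
  using groupoid unfolding topological_groupoid_def by blast

lemma inverse_arrow: "g \<in> topspace TG \<Longrightarrow> i g \<in> topspace TG \<and> r (i g) = s g \<and> s (i g) = r g \<and>
      m g (i g) = r g \<and> m (i g) g = s g"
  using groupoid unfolding topological_groupoid_def by blast

lemma continuous_range: "continuous_map TG TG r"
  using groupoid unfolding topological_groupoid_def by blast

lemma continuous_mult:
    "continuous_map (subtopology (prod_topology TG TG) (composable_pairs TG r s)) TG (\<lambda>(g, h). m g h)"
  using groupoid unfolding topological_groupoid_def by blast

lemma continuous_momentum: "continuous_map TZ (subtopology TG U) p"
  using action unfolding groupoid_right_action_def by blast

lemma act_closed: "\<lbrakk>z \<in> topspace TZ; g \<in> topspace TG; p z = r g\<rbrakk> \<Longrightarrow>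
      a z g \<in> topspace TZ \<and> p (a z g) = s g"
  using action unfolding groupoid_right_action_def by blast

lemma act_unit: "z \<in> topspace TZ \<Longrightarrow> a z (p z) = z"
  using action unfolding groupoid_right_action_def by blast

lemma act_assoc: "\<lbrakk>z \<in> topspace TZ; g \<in> topspace TG; h \<in> topspace TG; p z = r g; s g = r h\<rbrakk> \<Longrightarrow>
      a (a z g) h = a z (m g h)"
  using action unfolding groupoid_right_action_def by blast

lemma continuous_act: "continuous_map TZG TZ (\<lambda>(z, g). a z g)"
  using action unfolding groupoid_right_action_def by blast

lemma topspace_TZG: "topspace TZG = action_pairs TZ TG r p"
  by (auto simp: action_pairs_def)

lemma continuous_rs_map: "continuous_map TZG (prod_topology TZ TZ) rs_map"
proof -
  have "continuous_map TZG TZ fst"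
    by (intro continuous_map_from_subtopology continuous_map_fst)
  moreover have "fst \<circ> rs_map = fst" "snd \<circ> rs_map = (\<lambda>(z, g). a z g)"
    by auto
  ultimately show ?thesis
    using continuous_act by (simp add: continuous_map_pairwise)
qed

lemma proper_action_iff: "proper_action TG r TZ p a \<longleftrightarrow> proper_map TZG (prod_topology TZ TZ) rs_map"
proof -
  have "(\<lambda>x. ((\<lambda>(z, g). z) x, (\<lambda>(z, g). a z g) x)) = rs_map"
    by auto
  then show ?thesis
    unfolding proper_action_def proper_groupoid_def by simp
qed

lemma transporter_eq_image_preimage:
  "L \<subseteq> topspace TZ \<Longrightarrow>
    transporter TG r p a L K = snd ` {x \<in> topspace TZG. rs_map x \<in> L \<times> K}"
  unfolding transporter_def act_set_def topspace_TZG
  by (force simp: action_pairs_def image_iff)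

lemma stabilizer_eq_image_fibre:
  "z \<in> topspace TZ \<Longrightarrow> stabilizer TG r p a z = snd ` {x \<in> topspace TZG. rs_map x = (z, z)}"
  unfolding stabilizer_def topspace_TZG
  by (force simp: action_pairs_def image_iff)

lemma compactin_stabilizer:
  assumes "proper_map TZG (prod_topology TZ TZ) rs_map" and "z \<in> topspace TZ"
  shows "compactin TG (stabilizer TG r p a z)"
proof -
  have "compactin TZG {x \<in> topspace TZG. rs_map x = (z, z)}"
    using assms unfolding proper_map_def by auto
  from image_compactin[OF this continuous_map_snd[THEN continuous_map_from_subtopology]]
  show ?thesis
    by (simp only: stabilizer_eq_image_fibre[OF assms(2)])
qed

lemma compactin_transporter:
  assumes "proper_map TZG (prod_topology TZ TZ) rs_map" and "compactin TZ K" and "compactin TZ L"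
  shows "compactin TG (transporter TG r p a L K)"
proof -
  have L: "L \<subseteq> topspace TZ"
    using assms(3) by (rule compactin_subset_topspace)
  have "compactin (prod_topology TZ TZ) (L \<times> K)"
    using assms by (simp add: compactin_Times)
  with assms(1) have "compactin TZG {x \<in> topspace TZG. rs_map x \<in> L \<times> K}"
    by (rule compactin_proper_map_preimage)
  from image_compactin[OF this continuous_map_snd[THEN continuous_map_from_subtopology]]
  show ?thesis
    by (simp only: transporter_eq_image_preimage[OF L])
qed

lemma continuous_right_translation:
  assumes g0: "g0 \<in> topspace TG" and S: "\<And>h. h \<in> S \<Longrightarrow> h \<in> topspace TG \<and> s h = r g0"
  shows "continuous_map (subtopology TG S) TG (\<lambda>h. m h g0)"
proof -
  have "continuous_map (subtopology TG S) (prod_topology TG TG) (\<lambda>h. (h, g0))"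
    using g0 by (simp add: continuous_map_pairwise o_def continuous_map_from_subtopology)
  moreover have "(\<lambda>h. (h, g0)) \<in> topspace (subtopology TG S) \<rightarrow> composable_pairs TG r s"
    using S g0 by (auto simp: composable_pairs_def)
  ultimately have "continuous_map (subtopology TG S)
      (subtopology (prod_topology TG TG) (composable_pairs TG r s)) (\<lambda>h. (h, g0))"
    by (simp add: continuous_map_into_subtopology)
  from continuous_map_compose[OF this continuous_mult] show ?thesis
    by (simp add: o_def)
qed

lemma source_of_stabilizer:
  "\<lbrakk>z \<in> topspace TZ; h \<in> stabilizer TG r p a z\<rbrakk> \<Longrightarrow> h \<in> topspace TG \<and> s h = p z"
  using act_closed by (fastforce simp: stabilizer_def)

lemma fibre_rs_map_eq_translate:
  assumes z: "z \<in> topspace TZ" and g0: "g0 \<in> topspace TG" "p z = r g0"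
  shows "{x \<in> topspace TZG. rs_map x = (z, a z g0)} = (\<lambda>h. (z, m h g0)) ` stabilizer TG r p a z"
proof
  show "(\<lambda>h. (z, m h g0)) ` stabilizer TG r p a z \<subseteq> {x \<in> topspace TZG. rs_map x = (z, a z g0)}"
  proof (rule image_subsetI)
    fix h assume h: "h \<in> stabilizer TG r p a z"
    then have hG: "h \<in> topspace TG" "p z = r h" "a z h = z"
      by (simp_all add: stabilizer_def)
    have "s h = r g0"
      using source_of_stabilizer[OF z h] g0(2) by simp
    have "a z (m h g0) = a z g0"
      using act_assoc[OF z hG(1) g0(1) hG(2) \<open>s h = r g0\<close>] hG(3) by simp
    then show "(z, m h g0) \<in> {x \<in> topspace TZG. rs_map x = (z, a z g0)}"
      using mult_closed[OF hG(1) g0(1) \<open>s h = r g0\<close>] z hG(2)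
      by (simp add: topspace_TZG action_pairs_def)
  qed
next
  show "{x \<in> topspace TZG. rs_map x = (z, a z g0)} \<subseteq> (\<lambda>h. (z, m h g0)) ` stabilizer TG r p a z"
  proof
    fix x assume "x \<in> {x \<in> topspace TZG. rs_map x = (z, a z g0)}"
    then obtain g where x: "x = (z, g)" and g: "g \<in> topspace TG" "p z = r g" "a z g = a z g0"
      by (auto simp: topspace_TZG action_pairs_def)
    define j where "j = i g0"
    have jG: "j \<in> topspace TG" "r j = s g0" "s j = r g0" "m g0 j = r g0" "m j g0 = s g0"
      using inverse_arrow[OF g0(1)] by (auto simp: j_def)
    have sg: "s g = s g0"
      using act_closed[OF z g(1) g(2)] act_closed[OF z g0] g(3) by simp
    define h where "h = m g j"
    have "a z h = a (a z g0) j"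
      using act_assoc[OF z g(1) jG(1) g(2)] sg jG g(3) by (simp add: h_def)
    also have "\<dots> = z"
      using act_assoc[OF z g0(1) jG(1) g0(2)] jG g0(2) act_unit[OF z] by simp
    finally have "h \<in> stabilizer TG r p a z"
      using mult_closed[OF g(1) jG(1)] sg jG g(2) by (simp add: stabilizer_def h_def)
    moreover have "m h g0 = g"
      using mult_assoc[OF g(1) jG(1) g0(1)] sg jG mult_source[OF g(1)] by (simp add: h_def)
    ultimately show "x \<in> (\<lambda>h. (z, m h g0)) ` stabilizer TG r p a z"
      unfolding x by (metis rev_image_eqI)
  qed
qed

lemma compactin_fibre_rs_map:
  assumes z: "z \<in> topspace TZ" and g0: "g0 \<in> topspace TG" "p z = r g0"
    and St: "compactin TG (stabilizer TG r p a z)"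
  shows "compactin TZG {x \<in> topspace TZG. rs_map x = (z, a z g0)}"
proof -
  let ?St = "stabilizer TG r p a z"
  have St_source: "h \<in> topspace TG \<and> s h = r g0" if "h \<in> ?St" for h
    using source_of_stabilizer[OF z that] g0(2) by simp
  have "continuous_map (subtopology TG ?St) (prod_topology TZ TG) (\<lambda>h. (z, m h g0))"
    using z continuous_right_translation[OF g0(1) St_source]
    by (simp add: continuous_map_pairwise o_def)
  moreover have "(\<lambda>h. (z, m h g0)) \<in> topspace (subtopology TG ?St) \<rightarrow> action_pairs TZ TG r p"
    using St_source mult_closed[OF _ g0(1)] z by (auto simp: action_pairs_def stabilizer_def)
  ultimately have "continuous_map (subtopology TG ?St) TZG (\<lambda>h. (z, m h g0))"
    by (simp add: continuous_map_into_subtopology)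
  moreover have "compactin (subtopology TG ?St) ?St"
    using St by (simp add: compactin_subtopology)
  ultimately have "compactin TZG ((\<lambda>h. (z, m h g0)) ` ?St)"
    by (rule image_compactin[rotated])
  then show ?thesis
    by (simp only: fibre_rs_map_eq_translate[OF z g0])
qed

lemma proper_rs_map_if_closed:
  assumes closed: "closed_map TZG (prod_topology TZ TZ) rs_map"
    and St: "\<forall>z \<in> topspace TZ. compactin TG (stabilizer TG r p a z)"
  shows "proper_map TZG (prod_topology TZ TZ) rs_map"
  unfolding proper_map_def
proof (intro conjI closed ballI)
  fix y assume "y \<in> topspace (prod_topology TZ TZ)"
  then obtain z w where y: "y = (z, w)" and z: "z \<in> topspace TZ"
    by auto
  show "compactin TZG {x \<in> topspace TZG. rs_map x = y}"
  proof (cases "\<exists>g0 \<in> topspace TG. p z = r g0 \<and> a z g0 = w")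
    case True
    then show ?thesis
      using compactin_fibre_rs_map z St y by blast
  next
    case False
    then have "{x \<in> topspace TZG. rs_map x = y} = {}"
      by (auto simp: y topspace_TZG action_pairs_def)
    then show ?thesis
      by (simp only: compactin_empty)
  qed
qed

lemma closedin_action_pairs:
  assumes "Hausdorff_space (subtopology TG U)"
  shows "closedin (prod_topology TZ TG) (action_pairs TZ TG r p)"
proof -
  have "continuous_map TG (subtopology TG U) r"
    using continuous_range range_in_units by (simp add: continuous_map_into_subtopology)
  then have "continuous_map (prod_topology TZ TG) (subtopology TG U) (r \<circ> snd)"
    by (rule continuous_map_compose[OF continuous_map_snd])
  moreover have "continuous_map (prod_topology TZ TG) (subtopology TG U) (p \<circ> fst)"
    using continuous_momentum by (rule continuous_map_compose[OF continuous_map_fst])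
  ultimately have "closedin (prod_topology TZ TG)
      {x \<in> topspace (prod_topology TZ TG). (p \<circ> fst) x = (r \<circ> snd) x}"
    by (intro closedin_continuous_maps_eq[OF assms])
  moreover have "{x \<in> topspace (prod_topology TZ TG). (p \<circ> fst) x = (r \<circ> snd) x} =
      action_pairs TZ TG r p"
    by (auto simp: action_pairs_def)
  ultimately show ?thesis
    by simp
qed

lemma proper_rs_map_if_rel_compact_transporters:
  assumes HU: "Hausdorff_space (subtopology TG U)" and LC: "locally_compact_paper TZ"
    and HZ: "Hausdorff_space TZ"
    and cover: "topspace TZ = (\<Union>A \<in> \<A>. TZ interior_of A)"
    and rel_compact: "\<forall>A \<in> \<A>. \<forall>B \<in> \<A>. rel_quasi_compact TG (transporter TG r p a A B)"
  shows "proper_map TZG (prod_topology TZ TZ) rs_map"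
proof (rule proper_map_if_compact_preimage_nbhds[OF continuous_rs_map])
  show "Hausdorff_space (prod_topology TZ TZ)"
    using HZ by (simp add: Hausdorff_space_prod_topology)
  fix y assume "y \<in> topspace (prod_topology TZ TZ)"
  then obtain z w where y: "y = (z, w)" and "z \<in> topspace TZ" "w \<in> topspace TZ"
    by auto
  then obtain A B where A: "A \<in> \<A>" "z \<in> TZ interior_of A" and B: "B \<in> \<A>" "w \<in> TZ interior_of B"
    using cover by blast
  obtain C where C: "compactin TG C" "transporter TG r p a A B \<subseteq> C"
    using rel_compact A(1) B(1) unfolding rel_quasi_compact_def by blast
  obtain V K where V: "openin TZ V" "z \<in> V" "V \<subseteq> K" and K: "compactin TZ K"
    using LC \<open>z \<in> topspace TZ\<close> unfolding locally_compact_paper_def compact_subset_def by blast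
  define W where "W = (V \<inter> TZ interior_of A) \<times> TZ interior_of B"
  have "openin (prod_topology TZ TZ) W" "y \<in> W"
    using V A B y by (auto simp: W_def openin_prod_Times_iff openin_interior_of)
  moreover have "compactin TZG (action_pairs TZ TG r p \<inter> (K \<times> C))"
    using closed_Int_compactin[OF closedin_action_pairs[OF HU]] K C(1)
    by (simp add: compactin_subtopology compactin_Times)
  moreover have "{x \<in> topspace TZG. rs_map x \<in> W} \<subseteq> action_pairs TZ TG r p \<inter> (K \<times> C)"
  proof
    fix x assume "x \<in> {x \<in> topspace TZG. rs_map x \<in> W}"
    then obtain z' g where x: "x = (z', g)" "x \<in> action_pairs TZ TG r p"
        and zg: "z' \<in> V" "z' \<in> TZ interior_of A" "a z' g \<in> TZ interior_of B"
      by (auto simp: W_def topspace_TZG)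
    have "z' \<in> A" "a z' g \<in> B" "g \<in> topspace TG" "p z' = r g"
      using zg x interior_of_subset by (fastforce simp: action_pairs_def)+
    then have "g \<in> transporter TG r p a A B"
      unfolding transporter_def act_set_def by blast
    then show "x \<in> action_pairs TZ TG r p \<inter> (K \<times> C)"
      using x zg(1) V(3) C(2) by auto
  qed
  ultimately show "\<exists>W C. openin (prod_topology TZ TZ) W \<and> y \<in> W \<and> compactin TZG C \<and>
      {x \<in> topspace TZG. rs_map x \<in> W} \<subseteq> C"
    by (intro exI conjI)
qed

end

theorem proposition2p14:
  fixes TG :: "'g topology" and U :: "'g set" and r s :: "'g \<Rightarrow> 'g"
    and m :: "'g \<Rightarrow> 'g \<Rightarrow> 'g" and i :: "'g \<Rightarrow> 'g"
    and TZ :: "'z topology" and p :: "'z \<Rightarrow> 'g" and a :: "'z \<Rightarrow> 'g \<Rightarrow> 'z"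
  assumes act: "groupoid_right_action TG U r s m i TZ p a"
  defines "c1 \<equiv> proper_action TG r TZ p a"
    and "c2 \<equiv> closed_map (subtopology (prod_topology TZ TG) (action_pairs TZ TG r p))
                  (prod_topology TZ TZ) (\<lambda>(z, g). (z, a z g))
              \<and> (\<forall>z \<in> topspace TZ. compactin TG (stabilizer TG r p a z))"
    and "c3 \<equiv> \<forall>K L. compactin TZ K \<and> compactin TZ L \<longrightarrow> compactin TG (transporter TG r p a L K)"
    and "c3' \<equiv> \<forall>K L. compact_subset TZ K \<and> compact_subset TZ L \<longrightarrow>
                 compactin TG (transporter TG r p a L K)"
    and "c4 \<equiv> \<forall>K. compactin TZ K \<longrightarrow> compactin TG (transporter TG r p a K K)"
    and "c5 \<equiv> \<exists>\<A>. (\<forall>A \<in> \<A>. A \<subseteq> topspace TZ) \<and>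
                topspace TZ = (\<Union>A \<in> \<A>. TZ interior_of A) \<and>
                (\<forall>A \<in> \<A>. \<forall>B \<in> \<A>. rel_quasi_compact TG (transporter TG r p a A B))"
  shows "(c1 \<longleftrightarrow> c2) \<and> (c2 \<longrightarrow> c3) \<and> (c3 \<longrightarrow> c3') \<and> (c3 \<longrightarrow> c4)
       \<and> (locally_compact_paper TZ \<longrightarrow> (c3' \<longrightarrow> c5) \<and> (c4 \<longrightarrow> c5))
       \<and> (Hausdorff_space (subtopology TG U) \<and> locally_compact_paper TZ \<and> Hausdorff_space TZ \<longrightarrow>
            (c1 \<longleftrightarrow> c2) \<and> (c1 \<longleftrightarrow> c3) \<and> (c1 \<longleftrightarrow> c3') \<and> (c1 \<longleftrightarrow> c4) \<and> (c1 \<longleftrightarrow> c5))"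
proof -
  interpret groupoid_action TG U r s m i TZ p a
    by (rule groupoid_action.intro[OF act])
  have c1_iff: "c1 \<longleftrightarrow> proper_map TZG (prod_topology TZ TZ) rs_map"
    unfolding c1_def by (rule proper_action_iff)
  have c12: "c1 \<longleftrightarrow> c2"
    unfolding c1_iff c2_def
    using proper_imp_closed_map compactin_stabilizer proper_rs_map_if_closed by blast
  have c23: "c2 \<longrightarrow> c3"
    unfolding c3_def using c12 c1_iff compactin_transporter by blast
  have c33': "c3 \<longrightarrow> c3'" and c34: "c3 \<longrightarrow> c4"
    unfolding c3_def c3'_def c4_def compact_subset_def by blast+
  have rel_c5: c5 if "locally_compact_paper TZ"
      "\<forall>K L. compact_subset TZ K \<and> compact_subset TZ L \<longrightarrow>
        rel_quasi_compact TG (transporter TG r p a L K)"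
    unfolding c5_def using that by (rule interior_cover_with_rel_compact_transporters)
  have c3'5: "c3' \<longrightarrow> c5" and c45: "c4 \<longrightarrow> c5" if "locally_compact_paper TZ"
    using rel_c5[OF that] rel_quasi_compact_transporter_if_compact_self_transporters
    unfolding c3'_def c4_def compact_subset_def rel_quasi_compact_def by blast+
  have c51: "c5 \<longrightarrow> c1"
    if "Hausdorff_space (subtopology TG U)" "locally_compact_paper TZ" "Hausdorff_space TZ"
  proof
    assume c5
    then obtain \<A> where "topspace TZ = (\<Union>A \<in> \<A>. TZ interior_of A)"
        "\<forall>A \<in> \<A>. \<forall>B \<in> \<A>. rel_quasi_compact TG (transporter TG r p a A B)"
      unfolding c5_def by auto
    then show c1
      unfolding c1_iff by (rule proper_rs_map_if_rel_compact_transporters[OF that])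
  qed
  show ?thesis
    using c12 c23 c33' c34 c3'5 c45 c51 by blast
qed

end
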